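(* Consider binary operation $\wedge$ on $\{0,1\}$ defined by $1\wedge1=1\wedge0=0\wedge0=1$ and $0\wedge1=0$ (i.e. $a\wedge b=a^b$ with $0^0=1$). For $n\ge0$, the number of complete bracketings of the word $0\wedge0\wedge\cdots\wedge0$ with $n+1$ zeroes (i.e. full binary parenthesizations) whose value is $1$ equals the number of walks $0=y_0,y_1,\dots,y_n=2$ with steps $y_i-y_{i-1}\in\{-2,-1,1,2\}$ and $y_i\ge1$ for all $1\le i\le n$. *)

theory Defs
  imports Main
begin

definition wop :: "bool \<Rightarrow> bool \<Rightarrow> bool" where
  "wop a b = (a \<or> \<not> b)"

text \<open>Complete bracketings (full binary parenthesizations) of a word whose letters are all 0.\<close>
datatype brk = Leaf | Node brk brk

fun leaves :: "brk \<Rightarrow> nat" where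
  "leaves Leaf = 1"
| "leaves (Node l r) = leaves l + leaves r"

text \<open>Value of the bracketing, every letter being 0 (False = 0, True = 1).\<close>
fun val :: "brk \<Rightarrow> bool" where
  "val Leaf = False"
| "val (Node l r) = wop (val l) (val r)"

definition walks :: "nat \<Rightarrow> int list set" where
  "walks n = {ys. length ys = n + 1 \<and> ys ! 0 = 0 \<and> ys ! n = 2
     \<and> (\<forall>i\<in>{1..n}. ys ! i - ys ! (i - 1) \<in> {-2, -1, 1, 2} \<and> ys ! i \<ge> 1)}"

end

theory Submission
  imports Defs "HOL-Computational_Algebra.Formal_Power_Series"
begin

(* Let A and B be the generating functions, by number of operations, of the bracketings with
   value 1 and value 0. Splitting at the outermost operation gives A = x (A^2 + A B + B^2) and
   B = 1 + x B A. The generating functions W_k of the walks from 0 to k that stay \<ge> 1 after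
   the start are the unique solution of W_k = 0 for k < 0, W_0 = 1 and
   W_k = x (W_(k-2) + W_(k-1) + W_(k+1) + W_(k+2)) for k \<ge> 1.
   With p = x (A + B) B and q = x B^2, the sequence R_0 = 1, R_1 = p, R_(k+2) = p R_(k+1) + q R_k
   solves this system: the system is linear and shift-invariant, so it suffices to check it for
   k = 1, 2, 3, and these are polynomial identities implied by the equations for A and B.
   Finally R_2 = p^2 + q = A. *)

definition trees_val :: "bool \<Rightarrow> nat \<Rightarrow> brk set" where
  "trees_val v n = {t. leaves t = n + 1 \<and> val t = v}"

lemma leaves_ge_1: "leaves t \<ge> 1"
  by (induction t) auto

lemma trees_val_0: "trees_val v 0 = (if v then {} else {Leaf})"
proof -
  have one: "leaves t = 1 \<longleftrightarrow> t = Leaf" for t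
  proof (cases t)
    case (Node l r)
    with leaves_ge_1[of l] leaves_ge_1[of r] show ?thesis by simp
  qed simp
  show ?thesis
    unfolding trees_val_def by (simp only: add_0 one) auto
qed

lemma trees_val_Suc:
  "trees_val v (Suc n) =
     (\<Union>(i, p, q) \<in> {..n} \<times> {(p, q). wop p q = v}. case_prod Node ` (trees_val p i \<times> trees_val q (n - i)))"
  (is "_ = ?U")
proof (intro equalityI subsetI)
  fix t assume t: "t \<in> trees_val v (Suc n)"
  then obtain l r where lr: "t = Node l r"
    by (cases t) (simp_all add: trees_val_def)
  have "leaves l \<ge> 1" "leaves r \<ge> 1" by (rule leaves_ge_1)+
  moreover have "leaves l + leaves r = n + 2" "wop (val l) (val r) = v"
    using t lr by (simp_all add: trees_val_def)
  ultimately have "(leaves l - 1, val l, val r) \<in> {..n} \<times> {(p, q). wop p q = v}"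
    "(l, r) \<in> trees_val (val l) (leaves l - 1) \<times> trees_val (val r) (n - (leaves l - 1))"
    by (simp_all add: trees_val_def)
  then show "t \<in> ?U"
    unfolding lr by (intro UN_I[of "(leaves l - 1, val l, val r)"]) auto
next
  fix t assume "t \<in> ?U"
  then obtain i p q l r where "wop p q = v" "t = Node l r"
      "l \<in> trees_val p i" "r \<in> trees_val q (n - i)" "i \<le> n"
    by auto
  then show "t \<in> trees_val v (Suc n)"
    by (simp add: trees_val_def)
qed

lemma finite_trees_val: "finite (trees_val v n)"
proof (induction n arbitrary: v rule: less_induct)
  case (less n)
  show ?case
  proof (cases n)
    case 0
    then show ?thesis by (simp add: trees_val_0)
  next
    case (Suc m)
    have "finite {(p, q). wop p q = v}" by simp
    then show ?thesis
      using less Suc by (auto simp: trees_val_Suc)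
  qed
qed

lemma card_trees_val_Suc:
  "card (trees_val v (Suc n)) =
     (\<Sum>i\<le>n. \<Sum>(p, q) \<in> {(p, q). wop p q = v}. card (trees_val p i) * card (trees_val q (n - i)))"
proof -
  let ?I = "{..n} \<times> {(p, q). wop p q = v}"
  have disjoint: "\<forall>x\<in>?I. \<forall>y\<in>?I. x \<noteq> y \<longrightarrow>
      (\<lambda>(i, p, q). case_prod Node ` (trees_val p i \<times> trees_val q (n - i))) x \<inter>
      (\<lambda>(i, p, q). case_prod Node ` (trees_val p i \<times> trees_val q (n - i))) y = {}"
    by (auto simp: trees_val_def)
  have "card (trees_val v (Suc n)) =
      (\<Sum>(i, p, q) \<in> ?I. card (case_prod Node ` (trees_val p i \<times> trees_val q (n - i))))"
    unfolding trees_val_Suc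
    by (subst card_UN_disjoint) (use disjoint finite_trees_val in \<open>auto simp: split_beta\<close>)
  also have "\<dots> = (\<Sum>(i, p, q) \<in> ?I. card (trees_val p i) * card (trees_val q (n - i)))"
    by (intro sum.cong refl)
      (auto simp: card_image inj_on_def card_cartesian_product)
  also have "\<dots> = (\<Sum>i\<le>n. \<Sum>(p, q) \<in> {(p, q). wop p q = v}. card (trees_val p i) * card (trees_val q (n - i)))"
    by (subst sum.cartesian_product) (simp add: split_beta)
  finally show ?thesis .
qed

unbundle fps_syntax

definition val_gf :: "bool \<Rightarrow> int fps" where
  "val_gf v = Abs_fps (\<lambda>n. int (card (trees_val v n)))"

lemma val_gf_True:
  "val_gf True = fps_X * (val_gf True * val_gf True + val_gf True * val_gf False + val_gf False * val_gf False)"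
proof (rule fps_ext)
  fix n
  have pairs: "{(p, q). wop p q} = {(True, True), (True, False), (False, False)}"
    by (auto simp: wop_def)
  show "val_gf True $ n = (fps_X * (val_gf True * val_gf True + val_gf True * val_gf False + val_gf False * val_gf False)) $ n"
  proof (cases n)
    case (Suc m)
    have "(val_gf True * val_gf True + val_gf True * val_gf False + val_gf False * val_gf False) $ m = val_gf True $ Suc m"
      by (simp add: val_gf_def card_trees_val_Suc pairs fps_mult_nth sum.distrib atLeast0AtMost)
    with Suc show ?thesis by simp
  qed (simp add: val_gf_def trees_val_0)
qed

lemma val_gf_False: "val_gf False = 1 + fps_X * val_gf False * val_gf True"
proof (rule fps_ext)
  fix n
  have pairs: "{(p, q). \<not> wop p q} = {(False, True)}"
    by (auto simp: wop_def)
  show "val_gf False $ n = (1 + fps_X * val_gf False * val_gf True) $ n"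
  proof (cases n)
    case (Suc m)
    have "(val_gf False * val_gf True) $ m = val_gf False $ Suc m"
      by (simp add: val_gf_def card_trees_val_Suc pairs fps_mult_nth atLeast0AtMost)
    with Suc show ?thesis by (simp add: mult.assoc)
  qed (simp add: val_gf_def trees_val_0)
qed

definition walks_to :: "nat \<Rightarrow> int \<Rightarrow> int list set" where
  "walks_to n k = {ys. length ys = n + 1 \<and> ys ! 0 = 0 \<and> ys ! n = k
     \<and> (\<forall>i\<in>{1..n}. ys ! i - ys ! (i - 1) \<in> {-2, -1, 1, 2} \<and> ys ! i \<ge> 1)}"

lemma walks_to_0: "walks_to 0 k = (if k = 0 then {[0]} else {})"
  unfolding walks_to_def by (auto simp: length_Suc_conv)

lemma walks_to_Suc:
  "walks_to (Suc n) k =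
     (if 1 \<le> k then (\<lambda>ys. ys @ [k]) ` (\<Union>j \<in> {k - 2, k - 1, k + 1, k + 2}. walks_to n j) else {})"
  (is "_ = ?U")
proof (intro equalityI subsetI)
  fix ys assume ys: "ys \<in> walks_to (Suc n) k"
  then have len: "length ys = n + 2" and last: "ys ! Suc n = k"
    by (simp_all add: walks_to_def)
  define zs where "zs = butlast ys"
  have yz: "ys = zs @ [k]" and lz: "length zs = n + 1"
    using len last unfolding zs_def
    by (metis append_butlast_last_id diff_Suc_1 last_conv_nth length_greater_0_conv
        add_2_eq_Suc' zero_less_Suc, simp)
  have step: "ys ! i - ys ! (i - 1) \<in> {-2, -1, 1, 2} \<and> ys ! i \<ge> 1" if "i \<in> {1..Suc n}" for i
    using ys that by (simp add: walks_to_def)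
  have zs_nth: "ys ! i = zs ! i" if "i \<le> n" for i
    using that lz yz by (simp add: nth_append)
  have "zs ! i - zs ! (i - 1) \<in> {-2, -1, 1, 2} \<and> zs ! i \<ge> 1" if "i \<in> {1..n}" for i
  proof -
    have "i - 1 \<le> n" "i \<le> n" using that by auto
    then show ?thesis using step[of i] zs_nth[of i] zs_nth[of "i - 1"] that by simp
  qed
  then have "zs \<in> walks_to n (zs ! n)"
    using ys lz zs_nth[of 0] by (simp add: walks_to_def)
  moreover have "1 \<le> k" "zs ! n \<in> {k - 2, k - 1, k + 1, k + 2}"
    using step[of "Suc n"] last zs_nth[of n] by auto
  ultimately show "ys \<in> ?U"
    using yz by auto
next
  fix ys assume "ys \<in> ?U"
  then obtain zs j where k: "1 \<le> k" and yz: "ys = zs @ [k]"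
    and zs: "zs \<in> walks_to n j" and j: "j \<in> {k - 2, k - 1, k + 1, k + 2}"
    by (auto split: if_splits)
  have lz: "length zs = n + 1" and zn: "zs ! n = j"
    using zs by (simp_all add: walks_to_def)
  have ys_nth: "ys ! i = zs ! i" if "i \<le> n" for i
    using that lz yz by (simp add: nth_append)
  have ys_last: "ys ! Suc n = k"
    using yz lz by (simp add: nth_append)
  have "ys ! i - ys ! (i - 1) \<in> {-2, -1, 1, 2} \<and> ys ! i \<ge> 1" if "i \<in> {1..Suc n}" for i
  proof (cases "i = Suc n")
    case True
    then show ?thesis using ys_last ys_nth[of n] zn j k by auto
  next
    case False
    then have "i \<in> {1..n}" "i - 1 \<le> n" using that by auto
    then show ?thesis using zs ys_nth[of i] ys_nth[of "i - 1"] by (simp add: walks_to_def)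
  qed
  then show "ys \<in> walks_to (Suc n) k"
    using zs yz lz ys_nth[of 0] ys_last by (simp add: walks_to_def)
qed

lemma finite_walks_to: "finite (walks_to n k)"
  by (induction n arbitrary: k) (simp_all add: walks_to_0 walks_to_Suc)

lemma card_walks_to_Suc:
  assumes "1 \<le> k"
  shows "card (walks_to (Suc n) k) = (\<Sum>j \<in> {k - 2, k - 1, k + 1, k + 2}. card (walks_to n j))"
proof -
  have "card (walks_to (Suc n) k) = card (\<Union>j \<in> {k - 2, k - 1, k + 1, k + 2}. walks_to n j)"
    using assms by (simp add: walks_to_Suc card_image inj_on_def)
  also have "\<dots> = (\<Sum>j \<in> {k - 2, k - 1, k + 1, k + 2}. card (walks_to n j))"
    by (rule card_UN_disjoint) (auto simp: finite_walks_to, auto simp: walks_to_def)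
  finally show ?thesis .
qed

lemma coeff_eq_card_walks_to:
  fixes G :: "int \<Rightarrow> 'a::comm_ring_1 fps"
  assumes neg: "\<And>k. k < 0 \<Longrightarrow> G k = 0" and zero: "G 0 = 1"
    and pos: "\<And>k. 1 \<le> k \<Longrightarrow> G k = fps_X * (G (k - 2) + G (k - 1) + G (k + 1) + G (k + 2))"
  shows "G k $ n = of_nat (card (walks_to n k))"
proof (induction n arbitrary: k)
  case 0
  consider "k < 0" | "k = 0" | "1 \<le> k" by linarith
  then show ?case
    by cases (simp_all add: walks_to_0 neg zero pos[of k])
next
  case (Suc n)
  consider "k < 0" | "k = 0" | "1 \<le> k" by linarith
  then show ?case
  proof cases
    case 3
    have "G k $ Suc n = (G (k - 2) + G (k - 1) + G (k + 1) + G (k + 2)) $ n"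
      by (subst pos[OF 3]) simp
    also have "\<dots> = (\<Sum>j \<in> {k - 2, k - 1, k + 1, k + 2}. G j $ n)"
      by simp
    also have "\<dots> = of_nat (card (walks_to (Suc n) k))"
      by (simp add: Suc.IH card_walks_to_Suc[OF 3] del: insert_iff)
    finally show ?thesis .
  qed (simp_all add: walks_to_Suc neg zero)
qed

fun lin_rec :: "'a::comm_ring_1 \<Rightarrow> 'a \<Rightarrow> nat \<Rightarrow> 'a" where
  "lin_rec p q 0 = 1"
| "lin_rec p q (Suc 0) = p"
| "lin_rec p q (Suc (Suc k)) = p * lin_rec p q (Suc k) + q * lin_rec p q k"

lemma second_order_recurrence_zero:
  fixes d :: "nat \<Rightarrow> 'a::semiring_0"
  assumes "\<And>k. d (Suc (Suc k)) = p * d (Suc k) + q * d k" and "d 0 = 0" and "d 1 = 0"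
  shows "d k = 0"
proof -
  have "d k = 0 \<and> d (Suc k) = 0"
    by (induction k) (use assms in auto)
  then show ?thesis ..
qed

lemma lin_rec_shift_relation:
  fixes x :: "'a::comm_ring_1"
  assumes "\<And>k. k < 2 \<Longrightarrow> lin_rec p q (k + 2) =
    x * (lin_rec p q k + lin_rec p q (k + 1) + lin_rec p q (k + 3) + lin_rec p q (k + 4))"
  shows "lin_rec p q (k + 2) =
    x * (lin_rec p q k + lin_rec p q (k + 1) + lin_rec p q (k + 3) + lin_rec p q (k + 4))"
proof -
  let ?r = "lin_rec p q"
  define d where "d k = ?r (k + 2) - x * (?r k + ?r (k + 1) + ?r (k + 3) + ?r (k + 4))" for k
  have "d k = 0"
  proof (rule second_order_recurrence_zero)
    show "d (Suc (Suc k)) = p * d (Suc k) + q * d k" for k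
      by (simp add: d_def eval_nat_numeral algebra_simps)
    show "d 0 = 0" "d 1 = 0"
      using assms[of 0] assms[of 1] by (simp_all add: d_def)
  qed
  then show ?thesis by (simp add: d_def)
qed

lemma lin_rec_solves_walk_equations:
  fixes x a b :: "'a::idom"
  assumes "a = x * (a * a + a * b + b * b)" and "b = 1 + x * b * a"
    and G_def: "G = (\<lambda>k::int. if k < 0 then 0 else lin_rec (x * (a + b) * b) (x * b * b) (nat k))"
  shows "G 2 = a"
    and "\<And>k. 1 \<le> k \<Longrightarrow> G k = x * (G (k - 2) + G (k - 1) + G (k + 1) + G (k + 2))"
proof -
  let ?r = "lin_rec (x * (a + b) * b) (x * b * b)"
  have r2: "?r 2 = a" and r1: "?r 1 = x * (1 + ?r 2 + ?r 3)"
    and rel0: "?r 2 = x * (?r 0 + ?r 1 + ?r 3 + ?r 4)"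
    and rel1: "?r 3 = x * (?r 1 + ?r 2 + ?r 4 + ?r 5)"
    using assms(1,2) by (simp_all add: numeral_eq_Suc; algebra)+
  have rel: "?r (m + 2) = x * (?r m + ?r (m + 1) + ?r (m + 3) + ?r (m + 4))" for m
  proof (rule lin_rec_shift_relation)
    fix m :: nat assume "m < 2"
    then have "m = 0 \<or> m = 1" by linarith
    then show "?r (m + 2) = x * (?r m + ?r (m + 1) + ?r (m + 3) + ?r (m + 4))"
      using rel0 rel1 by (elim disjE) (simp_all del: lin_rec.simps add: numeral_eq_Suc)
  qed
  show "G 2 = a"
    using r2 by (simp add: G_def)
  fix k :: int assume "1 \<le> k"
  then consider "k = 1" | "k \<ge> 2" by linarith
  then show "G k = x * (G (k - 2) + G (k - 1) + G (k + 1) + G (k + 2))"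
  proof cases
    case 1
    then show ?thesis using r1 by (simp add: G_def)
  next
    case 2
    define m where "m = nat (k - 2)"
    have "k = int m + 2" using 2 by (simp add: m_def)
    moreover have "nat (int m + 2) = m + 2" "nat (int m + 1) = m + 1" "nat (int m + 3) = m + 3"
      "nat (int m + 4) = m + 4"
      by simp_all
    ultimately show ?thesis using rel[of m] by (simp add: G_def algebra_simps)
  qed
qed

theorem proposition5p4:
  fixes n :: nat
  shows "card {t. leaves t = n + 1 \<and> val t} = card (walks n)"
proof -
  define G where "G = (\<lambda>k::int. if k < 0 then 0 else
    lin_rec (fps_X * (val_gf True + val_gf False) * val_gf False) (fps_X * val_gf False * val_gf False) (nat k))"
  note G_walks = lin_rec_solves_walk_equations[OF val_gf_True val_gf_False G_def]
  have "val_gf True $ n = G 2 $ n"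
    using G_walks(1) by simp
  also have "\<dots> = int (card (walks_to n 2))"
    by (rule coeff_eq_card_walks_to[OF _ _ G_walks(2)]) (simp_all add: G_def)
  finally show ?thesis
    by (simp add: val_gf_def trees_val_def walks_def walks_to_def)
qed

end
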